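(* Let $r\in(0,1)$ and let $k\geq 1$ be an integer. Let $W_1,W_2,\dots$ be i.i.d.\ copies of a positive random variable $W$ with $\mathbb{E}[W]=1$ (an i.i.d.\ multiplicative cascade with scale ratio $r$), with scaling exponents $\zeta_p$ defined by $\mathbb{E}[W^p]=r^{\zeta_p}$ (so $\zeta_0=0$) and incremental exponents $\delta_p=\zeta_{p+k}-\zeta_p$. Suppose the hierarchical symmetry axiom A1 holds: there exists $\beta\in(0,1)$ such that $\delta_\infty=\lim_{p\to\infty}\delta_p$ exists and is finite and $$\delta_{p+k}=(1-\beta)\delta_\infty+\beta\,\delta_p\qquad\text{for all }p\in k\mathbb{N}_0=\{0,k,2k,\dots\}.$$ Set $\gamma=\delta_\infty/k$ and $C=(\delta_0-\delta_\infty)/(1-\beta)$. Then: (i) $\zeta_p=\gamma p+C\bigl(1-\beta^{p/k}\bigr)$. (ii) $W$ is uniquely determined to be log-Poisson: $\log W=a+bN$ with $N\sim\mathrm{Poisson}(\lambda)$, where $a=\gamma\ln r$, $b=(\ln\beta)/k$, $\lambda=-C\ln r$. No other probability distribution on $W$ is compatible with A1. (iii) Let $d$ be the spatial dimension of the cascade support and let $f(h)=\inf_{p}\,[ph-\zeta_p+d]$ be the singularity spectrum. Then $$f(h)=d-C+Cx(1-\ln x),\qquad x=\frac{k(h-\gamma)}{C|\ln\beta|},$$ for $h\in[\gamma,\ \gamma+(C/k)|\ln\beta|]$.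
   Context: $\log$ and $\ln$ denote the natural logarithm. The scaling exponents are equivalently the exponents of the structure functions $S_p(\ell)=\langle|\Phi(\ell)|^p\rangle=\ell^{\zeta_p}$ of the cascade observable at scales $\ell=r^n$. *)

theory Defs
  imports "HOL-Probability.Probability"
begin

definition zeta :: "'a measure \<Rightarrow> ('a \<Rightarrow> real) \<Rightarrow> real \<Rightarrow> real \<Rightarrow> real" where
  "zeta M W r p = ln (integral\<^sup>L M (\<lambda>\<omega>. W \<omega> powr p)) / ln r"

definition delta :: "'a measure \<Rightarrow> ('a \<Rightarrow> real) \<Rightarrow> real \<Rightarrow> nat \<Rightarrow> real \<Rightarrow> real" where
  "delta M W r k p = zeta M W r (p + real k) - zeta M W r p"

text \<open>Poisson distribution with parameter lam >= 0 on the naturals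
  (for lam = 0 this is the point mass at 0, since 0^0 = 1).\<close>
definition poisson_measure :: "real \<Rightarrow> nat measure" where
  "poisson_measure lam =
     density (count_space UNIV) (\<lambda>n. ennreal (lam ^ n / fact n * exp (- lam)))"

definition sing_spectrum ::
  "'a measure \<Rightarrow> ('a \<Rightarrow> real) \<Rightarrow> real \<Rightarrow> nat \<Rightarrow> real \<Rightarrow> real" where
  "sing_spectrum M W r d h = (INF p\<in>{0::real..}. p * h - zeta M W r p + real d)"

end

theory Submission
  imports Defs
begin

text \<open>Summing the recursion A1 along the lattice \<open>p = jk\<close> gives
  \<open>\<zeta>\<^sub>j\<^sub>k = j \<delta>\<^sub>\<infinity> + C (1 - \<beta>\<^sup>j)\<close>, so the variable \<open>V = W\<^sup>k / r\<^sup>k\<^sup>\<gamma>\<close> has the moments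
  \<open>E[V\<^sup>j] = exp (\<lambda> (\<beta>\<^sup>j - 1))\<close> of \<open>\<beta>\<^sup>N\<close> with \<open>N\<close> Poisson of rate \<open>\<lambda> = -C ln r\<close>.
  Jensen's inequality \<open>E[V]\<^sup>2 \<le> E[V\<^sup>2]\<close> forces \<open>\<lambda> \<ge> 0\<close>; the moments are then bounded by 1,
  so the Taylor expansion of the characteristic function converges everywhere and they determine
  the law of \<open>V\<close>. Hence \<open>ln W = a + b N\<close>, which yields \<open>\<zeta>\<^sub>p\<close> for every \<open>p\<close>, and the singularity
  spectrum is the Legendre transform of this \<open>\<zeta>\<close>, whose infimum is attained where
  \<open>\<beta>\<^bsup>p/k\<^esup> = x\<close>.\<close>

lemma (in prob_space) integral_pos_of_pos:
  fixes f :: "'a \<Rightarrow> real"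
  assumes "integrable M f" and "\<forall>\<omega>\<in>space M. 0 < f \<omega>"
  shows "0 < expectation f"
proof -
  have "0 \<le> expectation f"
    using assms(2) by (intro integral_nonneg_AE AE_I2) (auto intro: less_imp_le)
  moreover have "expectation f \<noteq> 0"
  proof
    assume "expectation f = 0"
    then have "AE \<omega> in M. f \<omega> = 0"
      using assms by (subst integral_nonneg_eq_0_iff_AE[symmetric]) (auto intro!: AE_I2 less_imp_le)
    moreover have "AE \<omega> in M. f \<omega> \<noteq> 0"
      using assms(2) by (intro AE_I2) auto
    ultimately have "AE \<omega> in M. False"
      by eventually_elim simp
    then show False
      by simp
  qed
  ultimately show ?thesis
    by simp
qed

lemma integral_power_eq_powr_zeta:
  assumes "prob_space M" and W_pos: "\<forall>\<omega>\<in>space M. 0 < W \<omega>"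
    and "integrable M (\<lambda>\<omega>. W \<omega> ^ n)" and "0 < r" and "r \<noteq> 1"
  shows "integral\<^sup>L M (\<lambda>\<omega>. W \<omega> ^ n) = r powr zeta M W r (real n)"
proof -
  have powr_eq: "integral\<^sup>L M (\<lambda>\<omega>. W \<omega> powr real n) = integral\<^sup>L M (\<lambda>\<omega>. W \<omega> ^ n)"
    using W_pos by (intro Bochner_Integration.integral_cong) (auto simp: powr_realpow)
  have "0 < integral\<^sup>L M (\<lambda>\<omega>. W \<omega> ^ n)"
    using assms(2,3) by (intro prob_space.integral_pos_of_pos[OF \<open>prob_space M\<close>]) auto
  then show ?thesis
    unfolding zeta_def powr_eq using assms(4,5) by (simp add: powr_def)
qed

lemma zeta_zero:
  assumes "prob_space M" and "\<forall>\<omega>\<in>space M. 0 < W \<omega>"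
  shows "zeta M W r 0 = 0"
proof -
  have "integral\<^sup>L M (\<lambda>\<omega>. W \<omega> powr 0) = integral\<^sup>L M (\<lambda>\<omega>. 1)"
    using assms(2) by (intro Bochner_Integration.integral_cong) auto
  then show ?thesis
    unfolding zeta_def using prob_space.prob_space[OF assms(1)] by simp
qed

lemma affine_recurrence_closed_form:
  fixes x :: "nat \<Rightarrow> 'a::comm_ring_1"
  assumes "\<And>j. x (Suc j) = (1 - \<beta>) * L + \<beta> * x j"
  shows "x j = L + \<beta> ^ j * (x 0 - L)"
proof (induction j)
  case (Suc j)
  show ?case
    unfolding assms Suc.IH by (simp add: algebra_simps)
qed simp

lemma zeta_lattice_closed_form:
  assumes "prob_space M" and "\<forall>\<omega>\<in>space M. 0 < W \<omega>" and "\<beta> \<noteq> 1"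
    and recursion: "\<forall>j::nat. delta M W r k (real (j * k) + real k)
                       = (1 - \<beta>) * \<delta>inf + \<beta> * delta M W r k (real (j * k))"
  shows "zeta M W r (real (j * k))
         = real j * \<delta>inf + (delta M W r k 0 - \<delta>inf) / (1 - \<beta>) * (1 - \<beta> ^ j)"
proof -
  have delta_lattice: "delta M W r k (real (i * k)) = \<delta>inf + \<beta> ^ i * (delta M W r k 0 - \<delta>inf)" for i
    using recursion by (subst affine_recurrence_closed_form[where x="\<lambda>i. delta M W r k (real (i * k))"])
      (simp_all add: add.commute)
  show ?thesis
  proof (induction j)
    case 0
    show ?case
      using zeta_zero[OF assms(1,2)] by simp
  next
    case (Suc j)
    have "zeta M W r (real (Suc j * k)) = zeta M W r (real (j * k)) + delta M W r k (real (j * k))"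
      unfolding delta_def by (simp add: add.commute)
    then show ?case
      unfolding Suc.IH delta_lattice using \<open>\<beta> \<noteq> 1\<close> by (simp add: field_simps)
  qed
qed

lemma sets_poisson_measure [measurable_cong]:
  "sets (poisson_measure lam) = sets (count_space UNIV)"
  unfolding poisson_measure_def by simp

lemma poisson_generating_function:
  fixes lam q :: real
  assumes "0 \<le> lam"
  shows "integrable (poisson_measure lam) (\<lambda>n. q ^ n)"
    and "integral\<^sup>L (poisson_measure lam) (\<lambda>n. q ^ n) = exp (lam * (q - 1))"
proof -
  define g where "g n = lam ^ n / fact n * exp (- lam)" for n :: nat
  have g_nonneg: "0 \<le> g n" for n
    unfolding g_def using assms by simp
  have poisson: "poisson_measure lam = density (count_space UNIV) g"
    unfolding poisson_measure_def g_def ..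
  have g_sums: "(\<lambda>n. g n * t ^ n) sums (exp (lam * t) * exp (- lam))" for t
  proof -
    have "(\<lambda>n. (lam * t) ^ n / fact n * exp (- lam)) sums (exp (lam * t) * exp (- lam))"
      using exp_converges[of "lam * t"] by (intro sums_mult2) (simp add: divide_inverse mult.commute)
    then show ?thesis
      unfolding g_def by (simp add: power_mult_distrib mult_ac)
  qed
  have "summable (\<lambda>n. norm (g n * q ^ n))"
    using sums_summable[OF g_sums[of "\<bar>q\<bar>"]] g_nonneg by (simp add: abs_mult power_abs)
  then have int: "integrable (count_space UNIV) (\<lambda>n. g n * q ^ n)"
    by (simp add: integrable_count_space_nat_iff)
  show "integrable (poisson_measure lam) (\<lambda>n. q ^ n)"
    unfolding poisson using int g_nonneg by (subst integrable_density) auto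
  have "integral\<^sup>L (poisson_measure lam) (\<lambda>n. q ^ n)
      = integral\<^sup>L (count_space UNIV) (\<lambda>n. g n * q ^ n)"
    unfolding poisson using g_nonneg by (subst integral_density) auto
  also have "\<dots> = exp (lam * q) * exp (- lam)"
    using sums_unique[OF g_sums] integral_count_space_nat[OF int] by simp
  also have "\<dots> = exp (lam * (q - 1))"
    by (simp add: mult_exp_exp algebra_simps)
  finally show "integral\<^sup>L (poisson_measure lam) (\<lambda>n. q ^ n) = exp (lam * (q - 1))" .
qed

lemma prob_space_poisson_measure:
  assumes "0 \<le> lam"
  shows "prob_space (poisson_measure lam)"
proof
  have "emeasure (poisson_measure lam) (space (poisson_measure lam))
      = (\<integral>\<^sup>+ n. ennreal ((1::real) ^ n) \<partial>poisson_measure lam)"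
    by (simp add: nn_integral_const)
  also have "\<dots> = ennreal (integral\<^sup>L (poisson_measure lam) (\<lambda>n. (1::real) ^ n))"
    using poisson_generating_function[OF assms, of 1] by (intro nn_integral_eq_integral) auto
  also have "\<dots> = 1"
    using poisson_generating_function(2)[OF assms, of 1] by simp
  finally show "emeasure (poisson_measure lam) (space (poisson_measure lam)) = 1" .
qed

lemma real_distribution_eq_of_moments_le_one:
  fixes M1 M2 :: "real measure"
  assumes "real_distribution M1" and "real_distribution M2"
    and nonneg1: "AE x in M1. 0 \<le> x" and nonneg2: "AE x in M2. 0 \<le> x"
    and int1: "\<And>n. integrable M1 (\<lambda>x. x ^ n)" and int2: "\<And>n. integrable M2 (\<lambda>x. x ^ n)"
    and moments_eq: "\<And>n. integral\<^sup>L M1 (\<lambda>x. x ^ n) = integral\<^sup>L M2 (\<lambda>x. x ^ n)"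
    and moments_le: "\<And>n. integral\<^sup>L M1 (\<lambda>x. x ^ n) \<le> 1"
  shows "M1 = M2"
proof (rule Levy_uniqueness[OF assms(1,2)], rule ext)
  fix t :: real
  interpret M1: real_distribution M1 by fact
  interpret M2: real_distribution M2 by fact
  define S where
    "S n = (\<Sum>k \<le> n. ((\<i> * t) ^ k / fact k) * complex_of_real (integral\<^sup>L M1 (\<lambda>x. x ^ k)))" for n
  have abs_moment1: "integral\<^sup>L M1 (\<lambda>x. \<bar>x\<bar> ^ n) \<le> 1" for n
    using moments_le[of n] by (subst integral_cong_AE[where g="\<lambda>x. x ^ n"]) (use nonneg1 in auto)
  have abs_moment2: "integral\<^sup>L M2 (\<lambda>x. \<bar>x\<bar> ^ n) \<le> 1" for n
    using moments_le[of n] unfolding moments_eq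
    by (subst integral_cong_AE[where g="\<lambda>x. x ^ n"]) (use nonneg2 in auto)
  have char_diff_le: "cmod (char M1 t - char M2 t) \<le> 4 * (\<bar>t\<bar> ^ n / fact n)" for n
  proof -
    have "cmod (char M1 t - S n) \<le> (2 * \<bar>t\<bar> ^ n / fact n) * integral\<^sup>L M1 (\<lambda>x. \<bar>x\<bar> ^ n)"
      unfolding S_def by (rule M1.char_approx1) (rule int1)
    also have "\<dots> \<le> 2 * \<bar>t\<bar> ^ n / fact n"
      using abs_moment1[of n] by (intro mult_left_le) auto
    finally have 1: "cmod (char M1 t - S n) \<le> 2 * \<bar>t\<bar> ^ n / fact n" .
    have "cmod (char M2 t - S n) \<le> (2 * \<bar>t\<bar> ^ n / fact n) * integral\<^sup>L M2 (\<lambda>x. \<bar>x\<bar> ^ n)"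
      unfolding S_def moments_eq by (rule M2.char_approx1) (rule int2)
    also have "\<dots> \<le> 2 * \<bar>t\<bar> ^ n / fact n"
      using abs_moment2[of n] by (intro mult_left_le) auto
    finally have 2: "cmod (char M2 t - S n) \<le> 2 * \<bar>t\<bar> ^ n / fact n" .
    have "char M1 t - char M2 t = (char M1 t - S n) - (char M2 t - S n)"
      by simp
    then show ?thesis
      using norm_triangle_ineq4[of "char M1 t - S n" "char M2 t - S n"] 1 2 by simp
  qed
  have "(\<lambda>n. \<bar>t\<bar> ^ n / fact n) \<longlonglongrightarrow> 0"
    using exp_converges[of "\<bar>t\<bar>"]
    by (intro summable_LIMSEQ_zero) (simp add: sums_iff divide_inverse mult.commute)
  then have "(\<lambda>n. 4 * (\<bar>t\<bar> ^ n / fact n)) \<longlonglongrightarrow> 0"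
    by (rule tendsto_mult_right_zero)
  then have "cmod (char M1 t - char M2 t) \<le> 0"
    by (rule tendsto_le[OF trivial_limit_sequentially _ tendsto_const]) (use char_diff_le in auto)
  then show "char M1 t = char M2 t"
    by simp
qed

lemma (in prob_space) nonneg_rate_of_poisson_power_moments:
  fixes V :: "'a \<Rightarrow> real"
  assumes "integrable M V" and "integrable M (\<lambda>\<omega>. (V \<omega>)\<^sup>2)" and "\<beta> \<noteq> 1"
    and "expectation V = exp (lam * (\<beta> - 1))"
    and "expectation (\<lambda>\<omega>. (V \<omega>)\<^sup>2) = exp (lam * (\<beta>\<^sup>2 - 1))"
  shows "0 \<le> lam"
proof -
  have "0 \<le> variance V"
    by (rule integral_nonneg_AE) simp
  then have "(expectation V)\<^sup>2 \<le> expectation (\<lambda>\<omega>. (V \<omega>)\<^sup>2)"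
    unfolding variance_eq[OF assms(1,2)] by simp
  then have "exp (2 * (lam * (\<beta> - 1))) \<le> exp (lam * (\<beta>\<^sup>2 - 1))"
    unfolding assms(4,5) by (simp add: power2_eq_square mult_exp_exp)
  then have "0 \<le> lam * (\<beta> - 1)\<^sup>2"
    by (simp add: power2_eq_square algebra_simps)
  moreover have "0 < (\<beta> - 1)\<^sup>2"
    using assms(3) by simp
  ultimately show ?thesis
    by (simp add: zero_le_mult_iff)
qed

lemma distr_eq_poisson_power_of_moments:
  fixes V :: "'a \<Rightarrow> real"
  assumes "prob_space M" and V_measurable: "V \<in> borel_measurable M"
    and V_nonneg: "\<forall>\<omega>\<in>space M. 0 \<le> V \<omega>"
    and "0 \<le> lam" and "0 \<le> \<beta>" and "\<beta> \<le> 1"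
    and V_int: "\<And>n. integrable M (\<lambda>\<omega>. V \<omega> ^ n)"
    and V_moments: "\<And>n. integral\<^sup>L M (\<lambda>\<omega>. V \<omega> ^ n) = exp (lam * (\<beta> ^ n - 1))"
  shows "distr M borel V = distr (poisson_measure lam) borel (\<lambda>n. \<beta> ^ n)"
proof (rule real_distribution_eq_of_moments_le_one)
  interpret M: prob_space M by fact
  interpret P: prob_space "poisson_measure lam"
    by (rule prob_space_poisson_measure) fact
  have poisson_moment: "integrable (poisson_measure lam) (\<lambda>m. (\<beta> ^ m) ^ n)
      \<and> integral\<^sup>L (poisson_measure lam) (\<lambda>m. (\<beta> ^ m) ^ n) = exp (lam * (\<beta> ^ n - 1))" for n
    using poisson_generating_function[OF \<open>0 \<le> lam\<close>, of "\<beta> ^ n"]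
    by (simp add: power_mult[symmetric] mult.commute)
  show "real_distribution (distr M borel V)"
    by (rule M.real_distribution_distr) (rule V_measurable)
  show "real_distribution (distr (poisson_measure lam) borel (\<lambda>n. \<beta> ^ n))"
    by (rule P.real_distribution_distr) simp
  show "AE x in distr M borel V. 0 \<le> x"
    using V_measurable V_nonneg by (subst AE_distr_iff) (auto intro!: AE_I2)
  show "AE x in distr (poisson_measure lam) borel (\<lambda>n. \<beta> ^ n). 0 \<le> x"
    using \<open>0 \<le> \<beta>\<close> by (subst AE_distr_iff) auto
  show "integrable (distr M borel V) (\<lambda>x. x ^ n)" for n
    using V_measurable by (subst integrable_distr_eq) (auto intro: V_int)
  show "integrable (distr (poisson_measure lam) borel (\<lambda>n. \<beta> ^ n)) (\<lambda>x. x ^ n)" for n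
    using poisson_moment[of n] by (subst integrable_distr_eq) auto
  show "integral\<^sup>L (distr M borel V) (\<lambda>x. x ^ n)
      = integral\<^sup>L (distr (poisson_measure lam) borel (\<lambda>n. \<beta> ^ n)) (\<lambda>x. x ^ n)" for n
    using poisson_moment[of n] V_measurable by (simp add: integral_distr V_moments)
  show "integral\<^sup>L (distr M borel V) (\<lambda>x. x ^ n) \<le> 1" for n
  proof -
    have "lam * (\<beta> ^ n - 1) \<le> 0"
      using \<open>0 \<le> lam\<close> \<open>0 \<le> \<beta>\<close> \<open>\<beta> \<le> 1\<close> by (simp add: mult_nonneg_nonpos power_le_one)
    then show ?thesis
      using V_measurable by (simp add: integral_distr V_moments)
  qed
qed

lemma log_poisson_of_lattice_moments:
  fixes W :: "'a \<Rightarrow> real"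
  assumes "prob_space M" and W_measurable: "W \<in> borel_measurable M"
    and W_pos: "\<forall>\<omega>\<in>space M. 0 < W \<omega>"
    and "k \<ge> 1" and "0 < \<beta>" and "\<beta> < 1"
    and W_int: "\<And>j. integrable M (\<lambda>\<omega>. W \<omega> ^ (j * k))"
    and W_moments: "\<And>j. integral\<^sup>L M (\<lambda>\<omega>. W \<omega> ^ (j * k))
                          = exp (real (j * k) * a + lam * (\<beta> ^ j - 1))"
  shows "0 \<le> lam"
    and "distr M borel (\<lambda>\<omega>. ln (W \<omega>))
         = distr (poisson_measure lam) borel (\<lambda>n. a + ln \<beta> / real k * real n)"
proof -
  interpret M: prob_space M by fact
  define V where "V \<omega> = W \<omega> ^ k / exp (real k * a)" for \<omega>
  have V_measurable: "V \<in> borel_measurable M"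
    unfolding V_def using W_measurable by measurable
  have V_power: "V \<omega> ^ j = W \<omega> ^ (j * k) / exp (real (j * k) * a)" for \<omega> j
    unfolding V_def
    by (simp add: power_divide power_mult[symmetric] mult.commute exp_of_nat_mult[symmetric] mult.left_commute)
  have V_int: "integrable M (\<lambda>\<omega>. V \<omega> ^ j)" for j
    unfolding V_power using W_int by simp
  have V_moments: "integral\<^sup>L M (\<lambda>\<omega>. V \<omega> ^ j) = exp (lam * (\<beta> ^ j - 1))" for j
    unfolding V_power by (simp add: W_moments exp_add)
  show lam_nonneg: "0 \<le> lam"
    using V_int[of 1] V_int[of 2] V_moments[of 1] V_moments[of 2] \<open>\<beta> < 1\<close>
    by (intro M.nonneg_rate_of_poisson_power_moments[where V=V and \<beta>=\<beta>]) auto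
  have V_law: "distr M borel V = distr (poisson_measure lam) borel (\<lambda>n. \<beta> ^ n)"
    using \<open>prob_space M\<close> V_measurable W_pos lam_nonneg \<open>0 < \<beta>\<close> \<open>\<beta> < 1\<close> V_int V_moments
    by (intro distr_eq_poisson_power_of_moments) (auto simp: V_def less_imp_le)
  define g where "g u = a + ln u / real k" for u :: real
  have g_measurable: "g \<in> borel_measurable borel"
    unfolding g_def by measurable
  have "distr M borel (\<lambda>\<omega>. ln (W \<omega>)) = distr M borel (g \<circ> V)"
  proof (rule distr_cong[OF refl refl])
    fix \<omega> assume "\<omega> \<in> space M"
    then have "0 < W \<omega>"
      using W_pos by simp
    moreover have "real k \<noteq> 0"
      using \<open>k \<ge> 1\<close> by simp
    ultimately show "ln (W \<omega>) = (g \<circ> V) \<omega>"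
      by (simp add: g_def V_def ln_div ln_realpow diff_divide_distrib)
  qed
  also have "\<dots> = distr (distr M borel V) borel g"
    by (rule distr_distr[symmetric]) (simp_all add: g_measurable V_measurable)
  also have "\<dots> = distr (poisson_measure lam) borel (g \<circ> (\<lambda>n. \<beta> ^ n))"
    unfolding V_law by (rule distr_distr) (simp_all add: g_measurable)
  also have "\<dots> = distr (poisson_measure lam) borel (\<lambda>n. a + ln \<beta> / real k * real n)"
    using \<open>0 < \<beta>\<close> by (intro distr_cong) (simp_all add: g_def ln_realpow)
  finally show "distr M borel (\<lambda>\<omega>. ln (W \<omega>))
      = distr (poisson_measure lam) borel (\<lambda>n. a + ln \<beta> / real k * real n)" .
qed

lemma integral_powr_log_poisson:
  fixes W :: "'a \<Rightarrow> real"
  assumes W_measurable: "W \<in> borel_measurable M" and W_pos: "\<forall>\<omega>\<in>space M. 0 < W \<omega>"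
    and "0 \<le> lam"
    and law: "distr M borel (\<lambda>\<omega>. ln (W \<omega>)) = distr (poisson_measure lam) borel (\<lambda>n. a + b * real n)"
  shows "integral\<^sup>L M (\<lambda>\<omega>. W \<omega> powr p) = exp (p * a + lam * (exp (p * b) - 1))"
proof -
  have "integral\<^sup>L M (\<lambda>\<omega>. W \<omega> powr p) = integral\<^sup>L M (\<lambda>\<omega>. exp (p * ln (W \<omega>)))"
    using W_pos by (intro Bochner_Integration.integral_cong) (auto simp: powr_def mult.commute)
  also have "\<dots> = integral\<^sup>L (distr M borel (\<lambda>\<omega>. ln (W \<omega>))) (\<lambda>x. exp (p * x))"
    using W_measurable by (subst integral_distr) simp_all
  also have "\<dots> = integral\<^sup>L (poisson_measure lam) (\<lambda>n. exp (p * a) * exp (p * b) ^ n)"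
    unfolding law
    by (subst integral_distr) (simp_all add: distrib_left exp_add exp_of_nat_mult[symmetric] mult_ac)
  also have "\<dots> = exp (p * a + lam * (exp (p * b) - 1))"
    using poisson_generating_function(2)[OF \<open>0 \<le> lam\<close>] by (simp add: exp_add)
  finally show ?thesis .
qed

lemma INF_linear_plus_exp:
  fixes C s u c :: real
  assumes "0 \<le> C" and "s < 0" and "0 \<le> u" and "u \<le> - C * s"
  defines "x \<equiv> u / (- C * s)"
  shows "(INF p\<in>{0..}. p * u + C * exp (s * p) + c) = c + C * x * (1 - ln x)"
proof (cases "u = 0")
  case True
  then have "x = 0"
    unfolding x_def by simp
  have lower: "c \<le> p * u + C * exp (s * p) + c" for p
    using \<open>u = 0\<close> \<open>0 \<le> C\<close> by simp
  have "(\<lambda>n. real n * u + C * exp s ^ n + c) \<longlonglongrightarrow> 0 + C * 0 + c"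
    using \<open>u = 0\<close> \<open>s < 0\<close> by (intro tendsto_intros LIMSEQ_power_zero) simp_all
  moreover have "(INF p\<in>{0..}. p * u + C * exp (s * p) + c) \<le> real n * u + C * exp s ^ n + c" for n
  proof -
    have "(INF p\<in>{0..}. p * u + C * exp (s * p) + c) \<le> real n * u + C * exp (s * real n) + c"
      using lower by (intro cINF_lower bdd_belowI2[where m=c]) auto
    then show ?thesis
      by (metis exp_of_nat_mult mult.commute)
  qed
  ultimately have "(INF p\<in>{0..}. p * u + C * exp (s * p) + c) \<le> c"
    using LIMSEQ_le_const by fastforce
  moreover have "c \<le> (INF p\<in>{0..}. p * u + C * exp (s * p) + c)"
    using lower by (intro cINF_greatest) auto
  ultimately show ?thesis
    using \<open>x = 0\<close> by simp
next
  case False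
  then have "0 < u" "0 < C"
    using assms(1,3,4) by (auto simp: order.order_iff_strict)
  have "0 < - C * s"
    using \<open>0 < C\<close> \<open>s < 0\<close> by (simp add: mult_pos_neg)
  then have "0 < x" "x \<le> 1"
    unfolding x_def using \<open>0 < u\<close> assms(4) by (auto intro: divide_pos_pos simp only: divide_le_eq_1_pos)
  have u_eq: "u = - C * s * x"
    unfolding x_def using \<open>0 < C\<close> \<open>s < 0\<close> by simp
  define p0 where "p0 = ln x / s"
  have "0 \<le> p0"
    unfolding p0_def using \<open>s < 0\<close> \<open>0 < x\<close> \<open>x \<le> 1\<close> by (simp add: divide_nonpos_neg)
  have exp_p0: "exp (s * p0) = x"
    unfolding p0_def using \<open>s < 0\<close> \<open>0 < x\<close> by simp
  have value_p0: "p0 * u + C * exp (s * p0) + c = c + C * x * (1 - ln x)"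
    unfolding exp_p0 u_eq p0_def using \<open>s < 0\<close> \<open>0 < x\<close> by (simp add: field_simps)
  have "p0 * u + C * exp (s * p0) + c \<le> p * u + C * exp (s * p) + c" for p
  proof -
    have "x * (1 + s * (p - p0)) \<le> x * exp (s * (p - p0))"
      using \<open>0 < x\<close> by (simp add: exp_ge_add_one_self)
    also have "\<dots> = exp (s * p)"
      using exp_p0 \<open>0 < x\<close> by (simp add: right_diff_distrib exp_diff)
    finally have "C * (x * (1 + s * (p - p0))) \<le> C * exp (s * p)"
      using \<open>0 < C\<close> by simp
    then show ?thesis
      unfolding exp_p0 u_eq by (simp add: algebra_simps)
  qed
  then have "(INF p\<in>{0..}. p * u + C * exp (s * p) + c) = p0 * u + C * exp (s * p0) + c"
    using \<open>0 \<le> p0\<close> by (intro cInf_eq_minimum) auto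
  then show ?thesis
    using value_p0 by simp
qed

lemma sing_spectrum_eq:
  assumes zeta_eq: "\<And>p. 0 \<le> p \<Longrightarrow> zeta M W r p = \<gamma> * p + C * (1 - \<beta> powr (p / real k))"
    and "k \<ge> 1" and "0 < \<beta>" and "\<beta> < 1" and "0 \<le> C"
    and h: "h \<in> {\<gamma> .. \<gamma> + (C / real k) * \<bar>ln \<beta>\<bar>}"
  defines "x \<equiv> real k * (h - \<gamma>) / (C * \<bar>ln \<beta>\<bar>)"
  shows "sing_spectrum M W r d h = real d - C + C * x * (1 - ln x)"
proof -
  define s where "s = ln \<beta> / real k"
  have "s < 0"
    unfolding s_def using \<open>k \<ge> 1\<close> \<open>0 < \<beta>\<close> \<open>\<beta> < 1\<close> by (simp add: divide_neg_pos)
  have "\<bar>ln \<beta>\<bar> = - ln \<beta>"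
    using \<open>0 < \<beta>\<close> \<open>\<beta> < 1\<close> by simp
  then have x_eq: "x = (h - \<gamma>) / (- C * s)" and h_le: "h - \<gamma> \<le> - C * s"
    using x_def h \<open>k \<ge> 1\<close> by (auto simp: s_def field_simps)
  have "sing_spectrum M W r d h = (INF p\<in>{0..}. p * (h - \<gamma>) + C * exp (s * p) + (real d - C))"
    unfolding sing_spectrum_def using zeta_eq \<open>0 < \<beta>\<close>
    by (intro INF_cong) (auto simp: s_def powr_def algebra_simps)
  also have "\<dots> = real d - C + C * x * (1 - ln x)"
    unfolding x_eq using \<open>0 \<le> C\<close> \<open>s < 0\<close> h h_le by (intro INF_linear_plus_exp) auto
  finally show ?thesis .
qed

theorem mainTheorem1:
  fixes M :: "'a measure" and W :: "'a \<Rightarrow> real"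
    and r \<beta> \<delta>inf :: real and k d :: nat
  assumes "prob_space M"
    and "0 < r" and "r < 1"
    and "k \<ge> 1"
    and "W \<in> borel_measurable M"
    and "\<forall>\<omega>\<in>space M. 0 < W \<omega>"
    and "integrable M W" and "integral\<^sup>L M W = 1"
    and "\<forall>j::nat. integrable M (\<lambda>\<omega>. W \<omega> ^ (j * k))"
    and "0 < \<beta>" and "\<beta> < 1"
    and "(\<lambda>j::nat. delta M W r k (real (j * k))) \<longlonglongrightarrow> \<delta>inf"
    and "\<forall>j::nat. delta M W r k (real (j * k) + real k)
                  = (1 - \<beta>) * \<delta>inf + \<beta> * delta M W r k (real (j * k))"
  shows "let \<gamma> = \<delta>inf / real k;
             C = (delta M W r k 0 - \<delta>inf) / (1 - \<beta>);
             a = \<gamma> * ln r; b = ln \<beta> / real k; lam = - C * ln r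
         in (\<forall>p::real. p \<ge> 0 \<longrightarrow> zeta M W r p = \<gamma> * p + C * (1 - \<beta> powr (p / real k)))
          \<and> lam \<ge> 0
          \<and> distr M borel (\<lambda>\<omega>. ln (W \<omega>))
              = distr (poisson_measure lam) borel (\<lambda>n. a + b * real n)
          \<and> (\<forall>h\<in>{\<gamma> .. \<gamma> + (C / real k) * \<bar>ln \<beta>\<bar>}.
               let x = real k * (h - \<gamma>) / (C * \<bar>ln \<beta>\<bar>)
               in sing_spectrum M W r d h = real d - C + C * x * (1 - ln x))"
proof -
  note prob = assms(1) and W_measurable = assms(5) and W_pos = assms(6)
    and W_int = assms(9)[rule_format]
  define \<gamma> where "\<gamma> = \<delta>inf / real k"
  define C where "C = (delta M W r k 0 - \<delta>inf) / (1 - \<beta>)"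
  define a where "a = \<gamma> * ln r"
  define lam where "lam = - C * ln r"
  have "ln r < 0"
    using assms(2,3) by simp
  have W_moments: "integral\<^sup>L M (\<lambda>\<omega>. W \<omega> ^ (j * k)) = exp (real (j * k) * a + lam * (\<beta> ^ j - 1))"
    for j
  proof -
    have "integral\<^sup>L M (\<lambda>\<omega>. W \<omega> ^ (j * k)) = r powr zeta M W r (real (j * k))"
      using W_int[of j] assms(2,3) by (intro integral_power_eq_powr_zeta[OF prob W_pos]) auto
    also have "\<dots> = r powr (real j * \<delta>inf + C * (1 - \<beta> ^ j))"
      using zeta_lattice_closed_form[OF prob W_pos _ assms(13)] assms(11) by (simp add: C_def)
    also have "\<dots> = exp (real (j * k) * a + lam * (\<beta> ^ j - 1))"
      using assms(2,4) by (simp add: powr_def a_def \<gamma>_def lam_def field_simps)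
    finally show ?thesis .
  qed
  have lam_nonneg: "0 \<le> lam"
    and law: "distr M borel (\<lambda>\<omega>. ln (W \<omega>))
              = distr (poisson_measure lam) borel (\<lambda>n. a + ln \<beta> / real k * real n)"
    using log_poisson_of_lattice_moments[OF prob W_measurable W_pos assms(4,10,11) W_int W_moments]
    by auto
  have zeta_all: "zeta M W r p = \<gamma> * p + C * (1 - \<beta> powr (p / real k))" for p
    using integral_powr_log_poisson[OF W_measurable W_pos lam_nonneg law, of p] \<open>ln r < 0\<close> assms(10)
    by (simp add: zeta_def powr_def a_def lam_def field_simps)
  have "0 \<le> C"
    using lam_nonneg \<open>ln r < 0\<close> by (simp add: lam_def mult_le_0_iff)
  then show ?thesis
    using zeta_all lam_nonneg law sing_spectrum_eq[of M W r \<gamma> C \<beta> k] assms(4,10,11)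
    unfolding Let_def \<gamma>_def [symmetric] C_def [symmetric] a_def [symmetric] lam_def [symmetric]
    by auto
qed

end
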